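(* Let $P\subseteq M_{\mathbb R}$ be a $d$-dimensional lattice simplex ($M$ of rank $d$) with vertices $v_0,\dots,v_d$, let $\tilde v_i:=(v_i,1)\in M\oplus\mathbb Z$, and let $\Pi:=\{\sum_{i=0}^d\lambda_i\tilde v_i:0\le\lambda_i<1\}$ be the half-open parallelepiped they span, with interior $\mathrm{int}(\Pi)=\{\sum\lambda_i\tilde v_i:0<\lambda_i<1\}$. Then \[\widetilde S(P,t)=\sum_{x\in\mathrm{int}(\Pi)\cap(M\oplus\mathbb Z)}t^{x_{d+1}},\] where $x_{d+1}$ is the last coordinate of $x$. In particular $\deg\widetilde S(P,t)\le\deg h^*_P(t)$.
   Context: For a lattice polytope $Q$ of dimension $k$, $h^*_Q(t)=(1-t)^{k+1}\sum_{j\ge0}\#(jQ\cap\text{lattice})\,t^j$, with $h^*_\emptyset=1$, $\dim\emptyset=-1$. For an Eulerian poset $\mathcal P$ of rank $d$ with minimum $\hat0$, maximum $\hat1$: if $d=0$, $g_{\mathcal P}=h_{\mathcal P}=1$; if $d>0$, $h_{\mathcal P}(t)=\sum_{\hat0<x\le\hat1}(t-1)^{\mathrm{rk}(x)-1}g_{[x,\hat1]}(t)$ and $g_{\mathcal P}(t)=\sum_{0\le i<d/2}(h_i-h_{i-1})t^i$ where $h_{\mathcal P}=\sum h_it^i$, $h_{-1}=0$. For faces $F\le P$ (including $\emptyset$), $[F,P]$ is the poset of faces between them. $\widetilde S(P,t)=\sum_{\emptyset\le F\le P}(-1)^{\dim P-\dim F}h^*_F(t)\,g_{[F,P]}(t)$.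 *)

theory Defs
  imports "HOL-Analysis.Analysis" "HOL-Computational_Algebra.Polynomial_FPS"
begin

text \<open>The lattice M = Z^d inside M_R = R^d, with d = CARD('n).\<close>
definition lattice_pts :: "(real ^ 'n) set" where
  "lattice_pts = {x. \<forall>i. x $ i \<in> \<int>}"

text \<open>Ehrhart h*-polynomial (as a formal power series), with h*_{empty} = 1
  and dim Q = aff_dim Q.\<close>
definition hstar :: "(real ^ 'n) set \<Rightarrow> int fps" where
  "hstar Q = (if Q = {} then 1 else
     (1 - fps_X) ^ (nat (aff_dim Q) + 1) *
     Abs_fps (\<lambda>j. int (card (lattice_pts \<inter> ((\<lambda>x. real j *\<^sub>R x) ` Q)))))"

definition face_rank :: "(real ^ 'n) set \<Rightarrow> (real ^ 'n) set \<Rightarrow> nat" where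
  "face_rank F P = nat (aff_dim P - aff_dim F)"

definition g_trunc :: "nat \<Rightarrow> int poly \<Rightarrow> int poly" where
  "g_trunc d h = (\<Sum>i\<in>{i. 2 * i < d}.
      monom (coeff h i - (if i = 0 then 0 else coeff h (i - 1))) i)"

text \<open>g- and h-polynomials of the Eulerian poset [F,P] of faces of P between F and P,
  computed with a fuel argument (the fuel rank+1 is always enough since ranks decrease).\<close>
fun g_fuel :: "nat \<Rightarrow> (real ^ 'n) set \<Rightarrow> (real ^ 'n) set \<Rightarrow> int poly" where
  "g_fuel 0 F P = 1"
| "g_fuel (Suc k) F P =
     (if face_rank F P = 0 then 1
      else g_trunc (face_rank F P)
        (\<Sum>G\<in>{G. G face_of P \<and> F \<subset> G}.
            [:-1, 1:] ^ (face_rank F G - 1) * g_fuel k G P))"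

definition g_interval :: "(real ^ 'n) set \<Rightarrow> (real ^ 'n) set \<Rightarrow> int poly" where
  "g_interval F P = g_fuel (face_rank F P + 1) F P"

definition Stilde :: "(real ^ 'n) set \<Rightarrow> int fps" where
  "Stilde P = (\<Sum>F\<in>{F. F face_of P}.
     (-1) ^ face_rank F P * hstar F * fps_of_poly (g_interval F P))"

end

theory Submission
  imports Defs
begin

(* For a simplex, every interval [F, P] of the face lattice is Boolean: the faces above conv(v_I)
   correspond to the nonempty subsets of the remaining vertices, so h_[F,P](t) = 1 + t + ... + t^(r-1)
   and every g-polynomial in S~ equals 1.  Since barycentric coordinates are unique, splitting the
   coefficients of a point of j conv(v_I) into integral and fractional parts identifies its lattice
   points with pairs (lattice point of the half-open parallelepiped Pi_I, weak composition), which
   gives h*_{conv(v_I)}(t) = sum over Pi_I of t^height.  Each Pi_I is the disjoint union of the open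
   parallelepipeds int Pi_J, J a subset of I, so S~ is an alternating sum over the Boolean lattice that
   Moebius inversion collapses to int Pi_D.  The degree bound follows from int Pi_D being contained
   in Pi_D. *)

lemma sum_subsets_power_card:
  fixes x :: "'a::comm_semiring_1"
  assumes "finite W"
  shows "(\<Sum>K\<in>Pow W. x ^ card K) = (x + 1) ^ card W"
  using prod_add[OF assms, of "\<lambda>_. x" "\<lambda>_. 1"] by simp

lemma sum_nonempty_subsets_eq_geometric:
  fixes t :: "'a::idom"
  assumes "finite W" and "t \<noteq> 1"
  shows "(\<Sum>K | K \<subseteq> W \<and> K \<noteq> {}. (t - 1) ^ (card K - 1)) = (\<Sum>i<card W. t ^ i)"
proof -
  have "(t - 1) * (\<Sum>K | K \<subseteq> W \<and> K \<noteq> {}. (t - 1) ^ (card K - 1))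
      = (\<Sum>K\<in>Pow W - {{}}. (t - 1) ^ card K)"
    unfolding sum_distrib_left
  proof (rule sum.cong)
    fix K assume "K \<in> Pow W - {{}}"
    with assms(1) have "card K \<noteq> 0" by (auto dest: finite_subset)
    then show "(t - 1) * (t - 1) ^ (card K - 1) = (t - 1) ^ card K"
      using power_Suc[of "t - 1" "card K - 1"] by simp
  qed auto
  also have "\<dots> = t ^ card W - 1"
    using sum_subsets_power_card[OF assms(1), of "t - 1"] assms(1) by (simp add: sum_diff1)
  also have "\<dots> = (t - 1) * (\<Sum>i<card W. t ^ i)"
    by (rule power_diff_1_eq)
  finally show ?thesis using assms(2) by simp
qed

lemma sum_supersets_eq_geometric:
  fixes t :: "'a::idom"
  assumes "finite D" and "I \<subseteq> D" and "t \<noteq> 1"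
  shows "(\<Sum>J | I \<subset> J \<and> J \<subseteq> D. (t - 1) ^ (card J - card I - 1)) = (\<Sum>i<card D - card I. t ^ i)"
proof -
  have "(\<Sum>J | I \<subset> J \<and> J \<subseteq> D. (t - 1) ^ (card J - card I - 1))
      = (\<Sum>K | K \<subseteq> D - I \<and> K \<noteq> {}. (t - 1) ^ (card K - 1))"
  proof (rule sum.reindex_bij_witness[where i = "\<lambda>K. I \<union> K" and j = "\<lambda>J. J - I"])
    fix J assume "J \<in> {J. I \<subset> J \<and> J \<subseteq> D}"
    then have "I \<subseteq> J"
      by auto
    with finite_subset[OF assms(2,1)] have "card (J - I) = card J - card I"
      by (rule card_Diff_subset)
    then show "(t - 1) ^ (card (J - I) - 1) = (t - 1) ^ (card J - card I - 1)" by simp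
  qed (use assms(2) in auto)
  also have "\<dots> = (\<Sum>i<card D - card I. t ^ i)"
    using sum_nonempty_subsets_eq_geometric[of "D - I" t] assms
    by (simp add: card_Diff_subset finite_subset)
  finally show ?thesis .
qed

lemma g_trunc_geometric:
  assumes "r > 0"
  shows "g_trunc r (\<Sum>i<r. [:0, 1:] ^ i) = 1"
proof -
  define h :: "int poly" where "h = (\<Sum>i<r. [:0, 1:] ^ i)"
  have coeff_h: "coeff h j = (if j < r then 1 else 0)" for j
    unfolding h_def by (simp add: coeff_sum monom_altdef[of 1, simplified, symmetric] coeff_monom)
  have "g_trunc r h = (\<Sum>i\<in>{i. 2 * i < r}. if i = 0 then 1 else 0)"
    unfolding g_trunc_def by (intro sum.cong) (auto simp: coeff_h)
  also have "\<dots> = 1"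
    using assms finite_subset[of "{i. 2 * i < r}" "{..<r}"] by (simp add: sum.delta subset_eq)
  finally show ?thesis
    unfolding h_def .
qed

definition weak_compositions :: "'a set \<Rightarrow> nat \<Rightarrow> ('a \<Rightarrow> nat) set" where
  "weak_compositions I r = {n \<in> extensional I. (\<Sum>i\<in>I. n i) = r}"

lemma finite_weak_compositions:
  assumes "finite I"
  shows "finite (weak_compositions I r)"
proof (rule finite_subset)
  show "weak_compositions I r \<subseteq> I \<rightarrow>\<^sub>E {..r}"
  proof
    fix n assume n: "n \<in> weak_compositions I r"
    have "n i \<le> (\<Sum>i\<in>I. n i)" if "i \<in> I" for i
      using assms that by (intro member_le_sum) auto
    with n show "n \<in> I \<rightarrow>\<^sub>E {..r}"
      by (auto simp: weak_compositions_def PiE_iff)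
  qed
  show "finite (I \<rightarrow>\<^sub>E {..r})"
    using assms by (simp add: finite_PiE)
qed

lemma bij_betw_weak_compositions_insert:
  assumes "finite I" and "a \<notin> I"
  shows "bij_betw (\<lambda>(k, n). n(a := k)) (SIGMA k:{..r}. weak_compositions I (r - k))
           (weak_compositions (insert a I) r)"
proof (rule bij_betw_imageI)
  show "inj_on (\<lambda>(k, n). n(a := k)) (SIGMA k:{..r}. weak_compositions I (r - k))"
  proof (rule inj_onI, clarify)
    fix k n k' n'
    assume "n \<in> weak_compositions I (r - k)" "n' \<in> weak_compositions I (r - k')"
      and eq: "n(a := k) = n'(a := k')"
    then have "n a = n' a"
      using assms(2) by (auto simp: weak_compositions_def extensional_def)
    have "n x = n' x" for x
    proof (cases "x = a")
      case False
      then show ?thesis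
        using fun_cong[OF eq, of x] by simp
    qed (use \<open>n a = n' a\<close> in simp)
    moreover have "k = k'"
      using fun_cong[OF eq, of a] by simp
    ultimately show "k = k' \<and> n = n'"
      by auto
  qed
  have sum_upd: "(\<Sum>i\<in>insert a I. (n(a := k)) i) = k + (\<Sum>i\<in>I. n i)" for n :: "'a \<Rightarrow> nat" and k
  proof -
    have "(\<Sum>i\<in>I. (n(a := k)) i) = (\<Sum>i\<in>I. n i)"
      using assms(2) by (intro sum.cong) auto
    then show ?thesis
      using assms by simp
  qed
  show "(\<lambda>(k, n). n(a := k)) ` (SIGMA k:{..r}. weak_compositions I (r - k))
      = weak_compositions (insert a I) r"
  proof (intro equalityI subsetI)
    fix m assume "m \<in> (\<lambda>(k, n). n(a := k)) ` (SIGMA k:{..r}. weak_compositions I (r - k))"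
    then obtain k n where "k \<le> r" "n \<in> weak_compositions I (r - k)" "m = n(a := k)"
      by auto
    then show "m \<in> weak_compositions (insert a I) r"
      using sum_upd[of n k] by (auto simp: weak_compositions_def extensional_def)
  next
    fix m assume m: "m \<in> weak_compositions (insert a I) r"
    then have "m a \<le> r" "m(a := undefined) \<in> weak_compositions I (r - m a)"
      using sum_upd[of "m(a := undefined)" "m a"]
      by (auto simp: weak_compositions_def extensional_def)
    then show "m \<in> (\<lambda>(k, n). n(a := k)) ` (SIGMA k:{..r}. weak_compositions I (r - k))"
      by (intro rev_image_eqI[of "(m a, m(a := undefined))"]) auto
  qed
qed

lemma fps_one_minus_X_times_ones: "(1 - fps_X) * Abs_fps (\<lambda>_. 1 :: 'a::ring_1) = 1"
proof -
  have "(1 :: 'a fps) = (1 - fps_X) * Abs_fps (\<lambda>n. \<Sum>i = 0..n. fps_nth (1 :: 'a fps) i)"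
    by (rule fps_divide_fps_X_minus1_sum_lemma)
  then show ?thesis
    by (simp add: sum.delta)
qed

lemma weak_compositions_fps:
  assumes "finite I"
  shows "(1 - fps_X) ^ card I * Abs_fps (\<lambda>r. int (card (weak_compositions I r))) = 1"
  using assms
proof (induction I rule: finite_induct)
  case empty
  have empty_compositions: "weak_compositions {} r = (if r = 0 then {\<lambda>_. undefined} else {})" for r
    by (auto simp: weak_compositions_def)
  have "Abs_fps (\<lambda>r. int (card (weak_compositions {} r))) = 1"
    by (intro fps_ext) (simp add: empty_compositions)
  then show ?case by simp
next
  case (insert a I)
  have "card (weak_compositions (insert a I) r) = (\<Sum>k\<le>r. card (weak_compositions I (r - k)))" for r
    using bij_betw_same_card[OF bij_betw_weak_compositions_insert[OF insert.hyps]] insert.hyps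
    by (simp add: card_SigmaI finite_weak_compositions)
  then have "Abs_fps (\<lambda>r. int (card (weak_compositions (insert a I) r)))
      = Abs_fps (\<lambda>_. 1) * Abs_fps (\<lambda>r. int (card (weak_compositions I r)))"
    by (intro fps_ext) (simp add: fps_mult_nth atLeast0AtMost)
  then have "(1 - fps_X) ^ card (insert a I) * Abs_fps (\<lambda>r. int (card (weak_compositions (insert a I) r)))
      = ((1 - fps_X) * Abs_fps (\<lambda>_. 1)) * ((1 - fps_X) ^ card I * Abs_fps (\<lambda>r. int (card (weak_compositions I r))))"
    using insert.hyps by (simp add: mult_ac)
  with insert.IH show ?case
    by (simp add: fps_one_minus_X_times_ones)
qed

lemma lattice_pts_add: "x \<in> lattice_pts \<Longrightarrow> y \<in> lattice_pts \<Longrightarrow> x + y \<in> lattice_pts"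
  by (auto simp: lattice_pts_def)

lemma lattice_pts_diff: "x \<in> lattice_pts \<Longrightarrow> y \<in> lattice_pts \<Longrightarrow> x - y \<in> lattice_pts"
  by (auto simp: lattice_pts_def)

lemma lattice_pts_sum_of_nat_scaleR:
  assumes "v ` I \<subseteq> lattice_pts"
  shows "(\<Sum>i\<in>I. real (n i) *\<^sub>R v i) \<in> lattice_pts"
  using assms by (auto simp: lattice_pts_def intro!: Ints_sum Ints_mult)

lemma finite_lattice_pts_norm_le: "finite (lattice_pts \<inter> {x :: real ^ 'n. norm x \<le> R})"
proof (rule finite_subset)
  show "lattice_pts \<inter> {x :: real ^ 'n. norm x \<le> R} \<subseteq> vec_lambda ` (UNIV \<rightarrow>\<^sub>E {k \<in> \<int>. \<bar>k\<bar> \<le> R})"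
  proof
    fix x :: "real ^ 'n"
    assume x: "x \<in> lattice_pts \<inter> {x. norm x \<le> R}"
    have "x $ i \<in> {k \<in> \<int>. \<bar>k\<bar> \<le> R}" for i
      using x order_trans[OF component_le_norm_cart[of x i]] by (simp add: lattice_pts_def)
    then have "(\<lambda>i. x $ i) \<in> UNIV \<rightarrow>\<^sub>E {k \<in> \<int>. \<bar>k\<bar> \<le> R}"
      by (simp add: PiE_iff)
    then show "x \<in> vec_lambda ` (UNIV \<rightarrow>\<^sub>E {k \<in> \<int>. \<bar>k\<bar> \<le> R})"
      by (rule rev_image_eqI) simp
  qed
  show "finite (vec_lambda ` (UNIV \<rightarrow>\<^sub>E {k \<in> \<int>. \<bar>k\<bar> \<le> R}) :: (real ^ 'n) set)"
    by (intro finite_imageI finite_PiE finite_abs_int_segment finite_class.finite_UNIV)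
qed

text \<open>The lattice points at height m of the half-open parallelepiped spanned by the lifted
  vertices (v i, 1), i \<in> I, projected to M (the height of \<Sum> c i (v i, 1) is \<Sum> c i);
  open_par is the same for its interior.\<close>

definition halfopen_par :: "('i \<Rightarrow> real ^ 'n) \<Rightarrow> 'i set \<Rightarrow> nat \<Rightarrow> (real ^ 'n) set" where
  "halfopen_par v I m = {y \<in> lattice_pts. \<exists>c. (\<forall>i\<in>I. 0 \<le> c i \<and> c i < 1) \<and>
      y = (\<Sum>i\<in>I. c i *\<^sub>R v i) \<and> (\<Sum>i\<in>I. c i) = real m}"

definition open_par :: "('i \<Rightarrow> real ^ 'n) \<Rightarrow> 'i set \<Rightarrow> nat \<Rightarrow> (real ^ 'n) set" where
  "open_par v I m = {y \<in> lattice_pts. \<exists>c. (\<forall>i\<in>I. 0 < c i \<and> c i < 1) \<and>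
      y = (\<Sum>i\<in>I. c i *\<^sub>R v i) \<and> (\<Sum>i\<in>I. c i) = real m}"

lemma open_par_subset_halfopen_par: "open_par v I m \<subseteq> halfopen_par v I m"
  unfolding open_par_def halfopen_par_def by (blast intro: less_imp_le)

lemma finite_halfopen_par:
  assumes "finite I"
  shows "finite (halfopen_par v I m)"
proof (rule finite_subset[OF _ finite_lattice_pts_norm_le])
  show "halfopen_par v I m \<subseteq> lattice_pts \<inter> {x. norm x \<le> (\<Sum>i\<in>I. norm (v i))}"
  proof
    fix y assume "y \<in> halfopen_par v I m"
    then obtain c where y: "y \<in> lattice_pts" "\<forall>i\<in>I. 0 \<le> c i \<and> c i < 1" "y = (\<Sum>i\<in>I. c i *\<^sub>R v i)"
      unfolding halfopen_par_def by blast
    have "norm y \<le> (\<Sum>i\<in>I. norm (c i *\<^sub>R v i))"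
      using y(3) norm_sum by blast
    also have "\<dots> \<le> (\<Sum>i\<in>I. norm (v i))"
      using y(2) by (intro sum_mono) (auto intro!: mult_left_le_one_le)
    finally show "y \<in> lattice_pts \<inter> {x. norm x \<le> (\<Sum>i\<in>I. norm (v i))}"
      using y(1) by simp
  qed
qed

lemma finite_open_par: "finite I \<Longrightarrow> finite (open_par v I m)"
  using finite_halfopen_par open_par_subset_halfopen_par by (rule finite_subset[rotated])

lemma open_par_zero_extension:
  assumes "finite I" and "J \<subseteq> I" and "y \<in> open_par v J m"
  obtains c where "\<forall>i\<in>I. 0 \<le> c i \<and> c i < 1" and "J = {i \<in> I. 0 < c i}"
    and "y = (\<Sum>i\<in>I. c i *\<^sub>R v i)" and "(\<Sum>i\<in>I. c i) = real m"
proof -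
  obtain c where c: "\<forall>i\<in>J. 0 < c i \<and> c i < 1" "y = (\<Sum>i\<in>J. c i *\<^sub>R v i)" "(\<Sum>i\<in>J. c i) = real m"
    using assms(3) unfolding open_par_def by blast
  define c' where "c' i = (if i \<in> J then c i else 0)" for i
  have "(\<Sum>i\<in>I. c' i *\<^sub>R v i) = (\<Sum>i\<in>J. c i *\<^sub>R v i)"
    by (rule sum.mono_neutral_cong_right) (use assms(1,2) in \<open>auto simp: c'_def\<close>)
  moreover have "(\<Sum>i\<in>I. c' i) = (\<Sum>i\<in>J. c i)"
    by (rule sum.mono_neutral_cong_right) (use assms(1,2) in \<open>auto simp: c'_def\<close>)
  moreover have "\<forall>i\<in>I. 0 \<le> c' i \<and> c' i < 1" and "J = {i \<in> I. 0 < c' i}"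
    using c(1) assms(2) by (auto simp: c'_def)
  ultimately show thesis
    using that c by simp
qed

lemma halfopen_par_eq_UN_open_par:
  assumes "finite I"
  shows "halfopen_par v I m = (\<Union>J\<in>Pow I. open_par v J m)"
proof (intro equalityI subsetI)
  fix y assume "y \<in> halfopen_par v I m"
  then obtain c where c: "y \<in> lattice_pts" "\<forall>i\<in>I. 0 \<le> c i \<and> c i < 1"
      "y = (\<Sum>i\<in>I. c i *\<^sub>R v i)" "(\<Sum>i\<in>I. c i) = real m"
    unfolding halfopen_par_def by blast
  define J where "J = {i \<in> I. 0 < c i}"
  have "(\<Sum>i\<in>J. c i *\<^sub>R v i) = (\<Sum>i\<in>I. c i *\<^sub>R v i)" "(\<Sum>i\<in>J. c i) = (\<Sum>i\<in>I. c i)"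
    using assms c(2) by (auto simp: J_def intro!: sum.mono_neutral_left)
  then have "y \<in> open_par v J m"
    using c unfolding open_par_def J_def by auto
  then show "y \<in> (\<Union>J\<in>Pow I. open_par v J m)"
    by (auto simp: J_def)
next
  fix y assume "y \<in> (\<Union>J\<in>Pow I. open_par v J m)"
  then obtain J where "J \<subseteq> I" "y \<in> open_par v J m"
    by auto
  with assms show "y \<in> halfopen_par v I m"
    by (elim open_par_zero_extension) (auto simp: halfopen_par_def open_par_def)
qed

lemma halfopen_par_plus_composition:
  assumes "y \<in> halfopen_par v I m" and "n \<in> weak_compositions I k"
  obtains c where "\<forall>i\<in>I. 0 \<le> c i \<and> c i < 1" and "y = (\<Sum>i\<in>I. c i *\<^sub>R v i)"
    and "(\<Sum>i\<in>I. c i) = real m"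
    and "y + (\<Sum>i\<in>I. real (n i) *\<^sub>R v i) = (\<Sum>i\<in>I. (c i + real (n i)) *\<^sub>R v i)"
    and "(\<Sum>i\<in>I. c i + real (n i)) = real (m + k)"
proof -
  obtain c where c: "\<forall>i\<in>I. 0 \<le> c i \<and> c i < 1" "y = (\<Sum>i\<in>I. c i *\<^sub>R v i)" "(\<Sum>i\<in>I. c i) = real m"
    using assms(1) unfolding halfopen_par_def by blast
  have "(\<Sum>i\<in>I. real (n i)) = real k"
    using assms(2) unfolding weak_compositions_def by (simp flip: of_nat_sum)
  then show thesis
    using that[OF c] c(2,3) by (simp add: scaleR_add_left sum.distrib)
qed

locale lattice_simplex =
  fixes v :: "'i \<Rightarrow> real ^ 'n" and D :: "'i set"
  assumes finite_D: "finite D"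
    and lattice_vertices: "v ` D \<subseteq> lattice_pts"
    and inj_on_vertices: "inj_on v D"
    and affine_independent_vertices: "\<not> affine_dependent (v ` D)"
begin

abbreviation simplex_face :: "'i set \<Rightarrow> (real ^ 'n) set" where
  "simplex_face I \<equiv> convex hull (v ` I)"

lemma affine_independent_vertex_subset: "I \<subseteq> D \<Longrightarrow> \<not> affine_dependent (v ` I)"
  by (rule affine_independent_subset[OF affine_independent_vertices image_mono])

lemma coefficients_unique:
  assumes "I \<subseteq> D" and "(\<Sum>i\<in>I. a i *\<^sub>R v i) = (\<Sum>i\<in>I. b i *\<^sub>R v i)"
    and "(\<Sum>i\<in>I. a i) = (\<Sum>i\<in>I. b i)" and "i \<in> I"
  shows "a i = b i"
proof -
  have fin: "finite I" and inj: "inj_on v I"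
    using assms(1) finite_D inj_on_vertices by (auto intro: finite_subset inj_on_subset)
  define u where "u x = a (inv_into I v x) - b (inv_into I v x)" for x
  have "sum u (v ` I) = 0" and "(\<Sum>x\<in>v ` I. u x *\<^sub>R x) = 0"
    using assms(2,3) inj by (simp_all add: sum.reindex u_def scaleR_diff_left sum_subtractf)
  then have "\<forall>x\<in>v ` I. u x = 0"
    using affine_independent_vertex_subset[OF assms(1)] affine_dependent_explicit_finite[of "v ` I"] fin
    by auto
  then show ?thesis
    using assms(4) inj by (auto simp: u_def)
qed

lemma mem_simplex_face_iff:
  assumes "I \<subseteq> D"
  shows "x \<in> simplex_face I \<longleftrightarrow>
    (\<exists>u. (\<forall>i\<in>I. 0 \<le> u i) \<and> (\<Sum>i\<in>I. u i) = 1 \<and> x = (\<Sum>i\<in>I. u i *\<^sub>R v i))"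
proof -
  have fin: "finite I" and inj: "inj_on v I"
    using assms finite_D inj_on_vertices by (auto intro: finite_subset inj_on_subset)
  show ?thesis
  proof
    assume "x \<in> simplex_face I"
    then obtain u where "\<forall>y\<in>v ` I. 0 \<le> u y" "sum u (v ` I) = 1" "(\<Sum>y\<in>v ` I. u y *\<^sub>R y) = x"
      using convex_hull_finite[of "v ` I"] fin by auto
    then show "\<exists>u. (\<forall>i\<in>I. 0 \<le> u i) \<and> (\<Sum>i\<in>I. u i) = 1 \<and> x = (\<Sum>i\<in>I. u i *\<^sub>R v i)"
      using inj by (intro exI[of _ "u \<circ> v"]) (auto simp: sum.reindex)
  next
    assume "\<exists>u. (\<forall>i\<in>I. 0 \<le> u i) \<and> (\<Sum>i\<in>I. u i) = 1 \<and> x = (\<Sum>i\<in>I. u i *\<^sub>R v i)"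
    then obtain u where "\<forall>i\<in>I. 0 \<le> u i" "(\<Sum>i\<in>I. u i) = 1" "x = (\<Sum>i\<in>I. u i *\<^sub>R v i)"
      by blast
    then have "(\<forall>y\<in>v ` I. 0 \<le> u (inv_into I v y)) \<and> (\<Sum>y\<in>v ` I. u (inv_into I v y)) = 1
        \<and> (\<Sum>y\<in>v ` I. u (inv_into I v y) *\<^sub>R y) = x"
      using inj by (simp add: sum.reindex)
    then show "x \<in> simplex_face I"
      using convex_hull_finite[of "v ` I"] fin by auto
  qed
qed

lemma vertex_mem_simplex_face_iff:
  assumes "i \<in> D" and "J \<subseteq> D"
  shows "v i \<in> simplex_face J \<longleftrightarrow> i \<in> J"
proof
  assume i: "v i \<in> simplex_face J"
  have "v i extreme_point_of simplex_face D"
    using extreme_point_of_convex_hull_affine_independent[OF affine_independent_vertices] assms(1)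
    by simp
  moreover have "simplex_face J \<subseteq> simplex_face D"
    using assms(2) by (intro hull_mono image_mono)
  ultimately have "v i extreme_point_of simplex_face J"
    using i by (auto simp: extreme_point_of_def)
  then have "v i \<in> v ` J"
    using extreme_point_of_convex_hull_affine_independent[OF affine_independent_vertex_subset[OF assms(2)]]
    by simp
  then show "i \<in> J"
    using assms inj_on_vertices by (auto dest: inj_onD)
qed (simp add: hull_inc)

lemma simplex_face_subset_iff:
  assumes "I \<subseteq> D" and "J \<subseteq> D"
  shows "simplex_face I \<subseteq> simplex_face J \<longleftrightarrow> I \<subseteq> J"
proof
  assume "simplex_face I \<subseteq> simplex_face J"
  then show "I \<subseteq> J"
    using assms vertex_mem_simplex_face_iff hull_inc by (metis image_eqI subset_iff)
qed (simp add: hull_mono image_mono)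

lemma inj_on_simplex_face: "inj_on simplex_face (Pow D)"
  by (rule inj_onI) (use simplex_face_subset_iff in \<open>blast intro: subset_antisym\<close>)

lemma faces_of_simplex: "{F. F face_of simplex_face D} = simplex_face ` Pow D"
proof -
  have "F face_of simplex_face D \<longleftrightarrow> (\<exists>I\<subseteq>D. F = simplex_face I)" for F
    unfolding face_of_convex_hull_affine_independent[OF affine_independent_vertices] subset_image_iff
    by blast
  then show ?thesis
    by blast
qed

lemma faces_of_simplex_above:
  assumes "I \<subseteq> D"
  shows "{G. G face_of simplex_face D \<and> simplex_face I \<subset> G} = simplex_face ` {J. I \<subset> J \<and> J \<subseteq> D}"
proof -
  have psubset_iff: "simplex_face I \<subset> simplex_face J \<longleftrightarrow> I \<subset> J" if "J \<subseteq> D" for J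
    using simplex_face_subset_iff[OF assms that] simplex_face_subset_iff[OF that assms]
    by (auto simp: psubset_eq)
  have "{G. G face_of simplex_face D \<and> simplex_face I \<subset> G}
      = {G \<in> {F. F face_of simplex_face D}. simplex_face I \<subset> G}"
    by simp
  also have "\<dots> = {G \<in> simplex_face ` Pow D. simplex_face I \<subset> G}"
    by (simp only: faces_of_simplex)
  also have "\<dots> = simplex_face ` {J. I \<subset> J \<and> J \<subseteq> D}"
  proof (intro equalityI subsetI)
    fix G assume "G \<in> {G \<in> simplex_face ` Pow D. simplex_face I \<subset> G}"
    then obtain J where "J \<subseteq> D" "G = simplex_face J" "simplex_face I \<subset> simplex_face J"
      by auto
    then show "G \<in> simplex_face ` {J. I \<subset> J \<and> J \<subseteq> D}"
      using psubset_iff by auto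
  next
    fix G assume "G \<in> simplex_face ` {J. I \<subset> J \<and> J \<subseteq> D}"
    then obtain J where "I \<subset> J" "J \<subseteq> D" "G = simplex_face J"
      by auto
    then show "G \<in> {G \<in> simplex_face ` Pow D. simplex_face I \<subset> G}"
      using psubset_iff by auto
  qed
  finally show ?thesis .
qed

lemma aff_dim_simplex_face:
  assumes "I \<subseteq> D"
  shows "aff_dim (simplex_face I) = int (card I) - 1"
proof -
  have "card (v ` I) = card I"
    using assms inj_on_vertices by (meson card_image inj_on_subset)
  then show ?thesis
    using aff_dim_affine_independent[OF affine_independent_vertex_subset[OF assms]]
    by (simp add: aff_dim_convex_hull)
qed

lemma face_rank_simplex_face:
  assumes "I \<subseteq> J" and "J \<subseteq> D"
  shows "face_rank (simplex_face I) (simplex_face J) = card J - card I"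
proof -
  have "card I \<le> card J"
    using assms finite_D by (meson card_mono finite_subset)
  then show ?thesis
    unfolding face_rank_def using assms aff_dim_simplex_face[of I] aff_dim_simplex_face[of J]
    by simp
qed

lemma g_fuel_simplex_face:
  assumes "I \<subseteq> D" and "face_rank (simplex_face I) (simplex_face D) < k"
  shows "g_fuel k (simplex_face I) (simplex_face D) = 1"
  using assms
proof (induction k arbitrary: I)
  case (Suc k)
  have rank_I: "face_rank (simplex_face I) (simplex_face D) = card D - card I"
    using Suc.prems(1) by (simp add: face_rank_simplex_face)
  have "(\<Sum>G\<in>{G. G face_of simplex_face D \<and> simplex_face I \<subset> G}.
          [:-1, 1:] ^ (face_rank (simplex_face I) G - 1) * g_fuel k G (simplex_face D))
      = (\<Sum>J\<in>{J. I \<subset> J \<and> J \<subseteq> D}. [:-1, 1:] ^ (card J - card I - 1))"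
  proof (rule sum.reindex_cong[OF _ faces_of_simplex_above[OF Suc.prems(1)]])
    show "inj_on simplex_face {J. I \<subset> J \<and> J \<subseteq> D}"
      using inj_on_simplex_face by (rule inj_on_subset) auto
    fix J assume J: "J \<in> {J. I \<subset> J \<and> J \<subseteq> D}"
    then have "card I < card J" "card J \<le> card D"
      using finite_D by (auto intro: psubset_card_mono card_mono finite_subset)
    then have "g_fuel k (simplex_face J) (simplex_face D) = 1"
      using J Suc.IH[of J] Suc.prems(2) rank_I by (simp add: face_rank_simplex_face)
    moreover have "face_rank (simplex_face I) (simplex_face J) = card J - card I"
      using J by (intro face_rank_simplex_face) auto
    ultimately show "[:-1, 1:] ^ (face_rank (simplex_face I) (simplex_face J) - 1)
        * g_fuel k (simplex_face J) (simplex_face D) = [:-1, 1:] ^ (card J - card I - 1)"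
      by simp
  qed
  also have "\<dots> = (\<Sum>i<card D - card I. [:0, 1:] ^ i)"
    using sum_supersets_eq_geometric[OF finite_D Suc.prems(1), of "[:0, 1:]"] by (simp add: one_pCons)
  finally show ?case
    using rank_I g_trunc_geometric[of "card D - card I"] by simp
qed simp

lemma g_interval_simplex_face: "I \<subseteq> D \<Longrightarrow> g_interval (simplex_face I) (simplex_face D) = 1"
  unfolding g_interval_def by (rule g_fuel_simplex_face) simp_all

lemma open_par_disjoint:
  assumes "J \<subseteq> D" and "J' \<subseteq> D" and "y \<in> open_par v J m" and "y \<in> open_par v J' m"
  shows "J = J'"
proof -
  have fin: "finite (J \<union> J')"
    using assms(1,2) finite_D by (meson finite_subset le_sup_iff)
  obtain c where c: "\<forall>i\<in>J \<union> J'. 0 \<le> c i \<and> c i < 1" "J = {i \<in> J \<union> J'. 0 < c i}"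
      "y = (\<Sum>i\<in>J \<union> J'. c i *\<^sub>R v i)" "(\<Sum>i\<in>J \<union> J'. c i) = real m"
    by (rule open_par_zero_extension[OF fin Un_upper1 assms(3)])
  obtain c' where c': "\<forall>i\<in>J \<union> J'. 0 \<le> c' i \<and> c' i < 1" "J' = {i \<in> J \<union> J'. 0 < c' i}"
      "y = (\<Sum>i\<in>J \<union> J'. c' i *\<^sub>R v i)" "(\<Sum>i\<in>J \<union> J'. c' i) = real m"
    by (rule open_par_zero_extension[OF fin Un_upper2 assms(4)])
  have "c i = c' i" if "i \<in> J \<union> J'" for i
    using coefficients_unique[of "J \<union> J'" c c' i] assms(1,2) c(3,4) c'(3,4) that by simp
  then have "{i \<in> J \<union> J'. 0 < c i} = {i \<in> J \<union> J'. 0 < c' i}"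
    by auto
  then show ?thesis
    using c(2) c'(2) by simp
qed

lemma card_halfopen_par:
  assumes "I \<subseteq> D"
  shows "card (halfopen_par v I m) = (\<Sum>J\<in>Pow I. card (open_par v J m))"
proof -
  have fin: "finite I"
    using assms finite_D by (rule finite_subset)
  have "card (\<Union>J\<in>Pow I. open_par v J m) = (\<Sum>J\<in>Pow I. card (open_par v J m))"
  proof (rule card_UN_disjoint)
    show "\<forall>J\<in>Pow I. finite (open_par v J m)"
      using fin by (auto intro: finite_open_par finite_subset)
    show "\<forall>J\<in>Pow I. \<forall>J'\<in>Pow I. J \<noteq> J' \<longrightarrow> open_par v J m \<inter> open_par v J' m = {}"
    proof (intro ballI impI)
      fix J J' assume "J \<in> Pow I" "J' \<in> Pow I" "J \<noteq> J'"
      moreover from this assms have "J \<subseteq> D" "J' \<subseteq> D"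
        by auto
      ultimately show "open_par v J m \<inter> open_par v J' m = {}"
        using open_par_disjoint by blast
    qed
  qed (simp add: fin)
  then show ?thesis
    unfolding halfopen_par_eq_UN_open_par[OF fin] .
qed

lemma dilated_simplex_face_iff:
  assumes "I \<subseteq> D" and "I \<noteq> {}"
  shows "x \<in> (\<lambda>z. real j *\<^sub>R z) ` simplex_face I \<longleftrightarrow>
    (\<exists>\<mu>. (\<forall>i\<in>I. 0 \<le> \<mu> i) \<and> (\<Sum>i\<in>I. \<mu> i) = real j \<and> x = (\<Sum>i\<in>I. \<mu> i *\<^sub>R v i))"
proof
  assume "x \<in> (\<lambda>z. real j *\<^sub>R z) ` simplex_face I"
  then obtain u where u: "\<forall>i\<in>I. 0 \<le> u i" "(\<Sum>i\<in>I. u i) = 1" "x = real j *\<^sub>R (\<Sum>i\<in>I. u i *\<^sub>R v i)"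
    using mem_simplex_face_iff[OF assms(1)] by auto
  then show "\<exists>\<mu>. (\<forall>i\<in>I. 0 \<le> \<mu> i) \<and> (\<Sum>i\<in>I. \<mu> i) = real j \<and> x = (\<Sum>i\<in>I. \<mu> i *\<^sub>R v i)"
    by (intro exI[of _ "\<lambda>i. real j * u i"]) (simp add: scaleR_sum_right flip: sum_distrib_left)
next
  assume "\<exists>\<mu>. (\<forall>i\<in>I. 0 \<le> \<mu> i) \<and> (\<Sum>i\<in>I. \<mu> i) = real j \<and> x = (\<Sum>i\<in>I. \<mu> i *\<^sub>R v i)"
  then obtain \<mu> where \<mu>: "\<forall>i\<in>I. 0 \<le> \<mu> i" "(\<Sum>i\<in>I. \<mu> i) = real j" "x = (\<Sum>i\<in>I. \<mu> i *\<^sub>R v i)"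
    by blast
  have fin: "finite I"
    using assms(1) finite_D by (rule finite_subset)
  show "x \<in> (\<lambda>z. real j *\<^sub>R z) ` simplex_face I"
  proof (cases "j = 0")
    case True
    then have "x = 0"
      using \<mu> fin sum_nonneg_eq_0_iff[of I \<mu>] by simp
    moreover obtain i where "i \<in> I"
      using assms(2) by blast
    ultimately show ?thesis
      using True by (intro image_eqI[of x _ "v i"]) (simp_all add: hull_inc)
  next
    case False
    define u where "u i = \<mu> i / real j" for i
    have "(\<Sum>i\<in>I. u i *\<^sub>R v i) \<in> simplex_face I"
      unfolding mem_simplex_face_iff[OF assms(1)] using \<mu>(1,2) False
      by (intro exI[of _ u]) (simp add: u_def flip: sum_divide_distrib)
    moreover have "x = real j *\<^sub>R (\<Sum>i\<in>I. u i *\<^sub>R v i)"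
      using \<mu>(3) False by (simp add: u_def scaleR_sum_right)
    ultimately show ?thesis
      by (rule rev_image_eqI)
  qed
qed

lemma halfopen_par_plus_composition_unique:
  assumes "I \<subseteq> D"
    and m: "m \<le> j" "y \<in> halfopen_par v I m" "n \<in> weak_compositions I (j - m)"
    and m': "m' \<le> j" "y' \<in> halfopen_par v I m'" "n' \<in> weak_compositions I (j - m')"
    and eq: "y + (\<Sum>i\<in>I. real (n i) *\<^sub>R v i) = y' + (\<Sum>i\<in>I. real (n' i) *\<^sub>R v i)"
  shows "m = m' \<and> y = y' \<and> n = n'"
proof -
  obtain c where c: "\<forall>i\<in>I. 0 \<le> c i \<and> c i < 1" "y = (\<Sum>i\<in>I. c i *\<^sub>R v i)" "(\<Sum>i\<in>I. c i) = real m"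
      "y + (\<Sum>i\<in>I. real (n i) *\<^sub>R v i) = (\<Sum>i\<in>I. (c i + real (n i)) *\<^sub>R v i)"
      "(\<Sum>i\<in>I. c i + real (n i)) = real (m + (j - m))"
    by (rule halfopen_par_plus_composition[OF m(2,3)])
  obtain c' where c': "\<forall>i\<in>I. 0 \<le> c' i \<and> c' i < 1" "y' = (\<Sum>i\<in>I. c' i *\<^sub>R v i)" "(\<Sum>i\<in>I. c' i) = real m'"
      "y' + (\<Sum>i\<in>I. real (n' i) *\<^sub>R v i) = (\<Sum>i\<in>I. (c' i + real (n' i)) *\<^sub>R v i)"
      "(\<Sum>i\<in>I. c' i + real (n' i)) = real (m' + (j - m'))"
    by (rule halfopen_par_plus_composition[OF m'(2,3)])
  have coeff_eq: "c i + real (n i) = c' i + real (n' i)" if "i \<in> I" for i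
    using coefficients_unique[OF assms(1), of "\<lambda>i. c i + real (n i)" "\<lambda>i. c' i + real (n' i)" i]
      eq c(4,5) c'(4,5) m(1) m'(1) that by simp
  \<comment> \<open>the integral parts are the floors of these coefficients, hence agree\<close>
  have n_eq: "n i = n' i" if "i \<in> I" for i
  proof -
    have "\<lfloor>c i + real (n i)\<rfloor> = int (n i)" "\<lfloor>c' i + real (n' i)\<rfloor> = int (n' i)"
      using c(1) c'(1) that by (simp_all add: floor_eq_iff)
    then show ?thesis
      using coeff_eq[OF that] by simp
  qed
  then have "n = n'"
    using m(3) m'(3) unfolding weak_compositions_def by (auto intro: extensionalityI)
  moreover have "c i = c' i" if "i \<in> I" for i
    using coeff_eq[OF that] n_eq[OF that] by simp
  then have "y = y'" and "real m = real m'"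
    using c(2,3) c'(2,3) by simp_all
  ultimately show ?thesis
    by simp
qed

lemma lattice_dilated_simplex_face_decompose:
  assumes "I \<subseteq> D" and "I \<noteq> {}" and "x \<in> lattice_pts" and "x \<in> (\<lambda>z. real j *\<^sub>R z) ` simplex_face I"
  obtains m y n where "m \<le> j" and "y \<in> halfopen_par v I m" and "n \<in> weak_compositions I (j - m)"
    and "x = y + (\<Sum>i\<in>I. real (n i) *\<^sub>R v i)"
proof -
  obtain \<mu> where \<mu>: "\<forall>i\<in>I. 0 \<le> \<mu> i" "(\<Sum>i\<in>I. \<mu> i) = real j" "x = (\<Sum>i\<in>I. \<mu> i *\<^sub>R v i)"
    using assms(4) dilated_simplex_face_iff[OF assms(1,2)] by blast
  define n where "n = restrict (\<lambda>i. nat \<lfloor>\<mu> i\<rfloor>) I"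
  define m where "m = j - (\<Sum>i\<in>I. n i)"
  define y where "y = (\<Sum>i\<in>I. frac (\<mu> i) *\<^sub>R v i)"
  have n_floor: "real (n i) = of_int \<lfloor>\<mu> i\<rfloor>" if "i \<in> I" for i
    using \<mu>(1) that by (simp add: n_def)
  have "(\<Sum>i\<in>I. real (n i)) \<le> (\<Sum>i\<in>I. \<mu> i)"
    using n_floor by (intro sum_mono) simp
  then have sum_n: "(\<Sum>i\<in>I. n i) \<le> j"
    using \<mu>(2) by (simp flip: of_nat_sum)
  have "(\<Sum>i\<in>I. frac (\<mu> i)) = (\<Sum>i\<in>I. \<mu> i) - (\<Sum>i\<in>I. real (n i))"
    using n_floor by (simp add: frac_def sum_subtractf)
  then have sum_frac: "(\<Sum>i\<in>I. frac (\<mu> i)) = real m"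
    using \<mu>(2) sum_n by (simp add: m_def of_nat_diff flip: of_nat_sum)
  have y_eq: "y = x - (\<Sum>i\<in>I. real (n i) *\<^sub>R v i)"
    using \<mu>(3) n_floor by (simp add: y_def frac_def scaleR_diff_left sum_subtractf)
  have lattice_I: "v ` I \<subseteq> lattice_pts"
    using assms(1) lattice_vertices by blast
  have "y \<in> lattice_pts"
    unfolding y_eq using assms(3) lattice_pts_sum_of_nat_scaleR[OF lattice_I] by (rule lattice_pts_diff)
  then have "y \<in> halfopen_par v I m"
    unfolding halfopen_par_def using sum_frac
    by (auto simp: y_def frac_lt_1 intro!: exI[of _ "\<lambda>i. frac (\<mu> i)"])
  moreover have "n \<in> weak_compositions I (j - m)"
    using sum_n by (simp add: weak_compositions_def m_def n_def)
  moreover have "x = y + (\<Sum>i\<in>I. real (n i) *\<^sub>R v i)"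
    using y_eq by simp
  ultimately show thesis
    by (intro that) (simp_all add: m_def)
qed

lemma lattice_dilated_simplex_face_eq_image:
  assumes "I \<subseteq> D" and "I \<noteq> {}"
  shows "lattice_pts \<inter> (\<lambda>z. real j *\<^sub>R z) ` simplex_face I
       = (\<lambda>(m, y, n). y + (\<Sum>i\<in>I. real (n i) *\<^sub>R v i)) `
           (SIGMA m:{..j}. halfopen_par v I m \<times> weak_compositions I (j - m))"
proof (intro equalityI subsetI)
  fix x assume "x \<in> lattice_pts \<inter> (\<lambda>z. real j *\<^sub>R z) ` simplex_face I"
  then have "x \<in> lattice_pts" and "x \<in> (\<lambda>z. real j *\<^sub>R z) ` simplex_face I"
    by simp_all
  then obtain m y n where "m \<le> j" "y \<in> halfopen_par v I m" "n \<in> weak_compositions I (j - m)"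
      and "x = y + (\<Sum>i\<in>I. real (n i) *\<^sub>R v i)"
    by (rule lattice_dilated_simplex_face_decompose[OF assms])
  then show "x \<in> (\<lambda>(m, y, n). y + (\<Sum>i\<in>I. real (n i) *\<^sub>R v i)) `
      (SIGMA m:{..j}. halfopen_par v I m \<times> weak_compositions I (j - m))"
    by (intro rev_image_eqI[of "(m, y, n)"]) simp_all
next
  have lattice_I: "v ` I \<subseteq> lattice_pts"
    using assms(1) lattice_vertices by blast
  fix x assume "x \<in> (\<lambda>(m, y, n). y + (\<Sum>i\<in>I. real (n i) *\<^sub>R v i)) `
      (SIGMA m:{..j}. halfopen_par v I m \<times> weak_compositions I (j - m))"
  then obtain m y n where m: "m \<le> j" "y \<in> halfopen_par v I m" "n \<in> weak_compositions I (j - m)"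
      and x: "x = y + (\<Sum>i\<in>I. real (n i) *\<^sub>R v i)"
    by auto
  obtain c where c: "\<forall>i\<in>I. 0 \<le> c i \<and> c i < 1" "y = (\<Sum>i\<in>I. c i *\<^sub>R v i)" "(\<Sum>i\<in>I. c i) = real m"
      "y + (\<Sum>i\<in>I. real (n i) *\<^sub>R v i) = (\<Sum>i\<in>I. (c i + real (n i)) *\<^sub>R v i)"
      "(\<Sum>i\<in>I. c i + real (n i)) = real (m + (j - m))"
    by (rule halfopen_par_plus_composition[OF m(2,3)])
  have "x \<in> (\<lambda>z. real j *\<^sub>R z) ` simplex_face I"
    unfolding dilated_simplex_face_iff[OF assms] using c(1,4,5) m(1) x
    by (intro exI[of _ "\<lambda>i. c i + real (n i)"]) simp
  moreover have "y \<in> lattice_pts"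
    using m(2) by (simp add: halfopen_par_def)
  then have "x \<in> lattice_pts"
    unfolding x using lattice_pts_sum_of_nat_scaleR[OF lattice_I] by (rule lattice_pts_add)
  ultimately show "x \<in> lattice_pts \<inter> (\<lambda>z. real j *\<^sub>R z) ` simplex_face I"
    by simp
qed

lemma card_lattice_dilated_simplex_face:
  assumes "I \<subseteq> D" and "I \<noteq> {}"
  shows "card (lattice_pts \<inter> (\<lambda>z. real j *\<^sub>R z) ` simplex_face I)
       = (\<Sum>m\<le>j. card (halfopen_par v I m) * card (weak_compositions I (j - m)))"
proof -
  have fin: "finite I"
    using assms(1) finite_D by (rule finite_subset)
  have "inj_on (\<lambda>(m, y, n). y + (\<Sum>i\<in>I. real (n i) *\<^sub>R v i))
      (SIGMA m:{..j}. halfopen_par v I m \<times> weak_compositions I (j - m))"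
    by (rule inj_onI) (auto dest: halfopen_par_plus_composition_unique[OF assms(1)])
  then have "card (lattice_pts \<inter> (\<lambda>z. real j *\<^sub>R z) ` simplex_face I)
      = card (SIGMA m:{..j}. halfopen_par v I m \<times> weak_compositions I (j - m))"
    unfolding lattice_dilated_simplex_face_eq_image[OF assms] by (rule card_image)
  also have "\<dots> = (\<Sum>m\<le>j. card (halfopen_par v I m) * card (weak_compositions I (j - m)))"
    using fin by (simp add: card_SigmaI finite_halfopen_par finite_weak_compositions card_cartesian_product)
  finally show ?thesis .
qed

lemma hstar_simplex_face:
  assumes "I \<subseteq> D"
  shows "hstar (simplex_face I) = Abs_fps (\<lambda>m. int (card (halfopen_par v I m)))"
proof (cases "I = {}")
  case True
  have "halfopen_par v {} m = (if m = 0 then {0} else {})" for m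
    by (auto simp: halfopen_par_def lattice_pts_def)
  then have "Abs_fps (\<lambda>m. int (card (halfopen_par v I m))) = 1"
    using True by (intro fps_ext) simp
  then show ?thesis
    using True by (simp add: hstar_def)
next
  case False
  have fin: "finite I"
    using assms finite_D by (rule finite_subset)
  have "card I > 0"
    using False fin by (simp add: card_gt_0_iff)
  then have "nat (aff_dim (simplex_face I)) + 1 = card I"
    using aff_dim_simplex_face[OF assms] by arith
  then have "hstar (simplex_face I) = (1 - fps_X) ^ card I
      * Abs_fps (\<lambda>j. int (card (lattice_pts \<inter> (\<lambda>z. real j *\<^sub>R z) ` simplex_face I)))"
    using False by (simp add: hstar_def)
  also have "Abs_fps (\<lambda>j. int (card (lattice_pts \<inter> (\<lambda>z. real j *\<^sub>R z) ` simplex_face I)))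
      = Abs_fps (\<lambda>m. int (card (halfopen_par v I m))) * Abs_fps (\<lambda>r. int (card (weak_compositions I r)))"
    by (rule fps_ext)
      (simp add: fps_mult_nth atLeast0AtMost card_lattice_dilated_simplex_face[OF assms False])
  finally show ?thesis
    using weak_compositions_fps[OF fin] by (simp add: mult.left_commute)
qed

lemma Stilde_simplex: "Stilde (simplex_face D) = Abs_fps (\<lambda>m. int (card (open_par v D m)))"
proof -
  have minus_one_power: "(-1 :: int fps) ^ k = fps_const ((-1) ^ k)" for k
    by (simp flip: fps_const_power fps_const_neg)
  have "Stilde (simplex_face D) = (\<Sum>I\<in>Pow D. (-1) ^ face_rank (simplex_face I) (simplex_face D)
      * hstar (simplex_face I) * fps_of_poly (g_interval (simplex_face I) (simplex_face D)))"
    unfolding Stilde_def faces_of_simplex sum.reindex[OF inj_on_simplex_face] by simp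
  also have "\<dots> = (\<Sum>I\<in>Pow D. fps_const ((-1) ^ (card D - card I))
      * Abs_fps (\<lambda>m. int (card (halfopen_par v I m))))"
    by (intro sum.cong)
      (simp_all add: face_rank_simplex_face hstar_simplex_face g_interval_simplex_face minus_one_power)
  also have "\<dots> = Abs_fps (\<lambda>m. \<Sum>I\<in>Pow D. (-1) ^ (card D - card I)
      * (\<Sum>J\<in>Pow I. int (card (open_par v J m))))"
    by (rule fps_ext) (simp add: fps_sum_nth card_halfopen_par)
  also have "\<dots> = Abs_fps (\<lambda>m. int (card (open_par v D m)))"
    using inclusion_exclusion_mobius[of "\<lambda>S. \<Sum>J\<in>Pow S. int (card (open_par v J _))"] finite_D
    by simp
  finally show ?thesis .
qed

lemma Stilde_simplex_coeff_eq_0: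
  assumes "\<forall>m\<ge>n. fps_nth (hstar (simplex_face D)) m = 0" and "n \<le> m"
  shows "fps_nth (Stilde (simplex_face D)) m = 0"
proof -
  have "card (halfopen_par v D m) = 0"
    using assms by (simp add: hstar_simplex_face)
  then have "halfopen_par v D m = {}"
    using finite_halfopen_par[OF finite_D, of v m] by simp
  then have "open_par v D m = {}"
    using open_par_subset_halfopen_par by blast
  then show ?thesis
    by (simp add: Stilde_simplex)
qed

end

theorem proposition4p6:
  fixes v :: "nat \<Rightarrow> real ^ 'n"
  defines "d \<equiv> CARD('n)"
  assumes vlat: "\<forall>i\<le>d. v i \<in> lattice_pts"
    and vinj: "inj_on v {..d}"
    and vindep: "\<not> affine_dependent (v ` {..d})"
  shows "Stilde (convex hull (v ` {..d})) =
           Abs_fps (\<lambda>m. int (card {y \<in> lattice_pts. \<exists>c::nat \<Rightarrow> real.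
              (\<forall>i\<le>d. 0 < c i \<and> c i < 1) \<and>
              y = (\<Sum>i\<le>d. c i *\<^sub>R v i) \<and> (\<Sum>i\<le>d. c i) = real m}))
       \<and> (\<forall>n. (\<forall>m\<ge>n. fps_nth (hstar (convex hull (v ` {..d}))) m = 0)
              \<longrightarrow> (\<forall>m\<ge>n. fps_nth (Stilde (convex hull (v ` {..d}))) m = 0))"
proof -
  interpret lattice_simplex v "{..d}"
    using vlat vinj vindep by unfold_locales auto
  have "open_par v {..d} m = {y \<in> lattice_pts. \<exists>c::nat \<Rightarrow> real.
      (\<forall>i\<le>d. 0 < c i \<and> c i < 1) \<and> y = (\<Sum>i\<le>d. c i *\<^sub>R v i) \<and> (\<Sum>i\<le>d. c i) = real m}" for m
    unfolding open_par_def Ball_def atMost_iff ..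
  then show ?thesis
    using Stilde_simplex Stilde_simplex_coeff_eq_0 by simp
qed

end
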